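(* Let $\pi$ be a (not necessarily unique) QSD of $(X_t)_{0\le t<\tau_\partial}$, $\lambda=\lambda(\pi)$, and assume the combined Dobrushin and reverse Dobrushin condition (DRD) holds with set $A$, constants $c_0,c_1>0$ and times $t_0,t_1>0$. Define $t_3:=t_0+t_1$ and $c_3:=\lambda^{t_0}c_0c_1/\pi(A)$. Then $$\frac{P_{t_3}(x,\cdot)}{P_{t_3}1(x)}\ge c_3\,\pi(\cdot)\quad\text{for every }x\in\chi .$$
   Context: $\chi$ is a metric space with Borel $\sigma$-algebra; $\partial\notin\chi$ is a cemetery point. $(X_t)_{0\le t<\tau_\partial}$ is a killed Markov process on $\chi$ in discrete or continuous time, absorption time $\tau_\partial=\inf\{t\ge0:X_t=\partial\}$, submarkovian semigroup $P_t(x,A)=\mathbb P_x(X_t\in A,\tau_\partial>t)$; $K1(x)=K(x,\chi)$ for a kernel $K$. A QSD is a probability measure $\pi$ with $\mathbb P_\pi(X_t\in\cdot\mid\tau_\partial>t)=\pi$ for all $t$; $\lambda(\pi):=\mathbb P_\pi(\tau_\partial>1)$. Reverse Dobrushin condition (RD): there exist $t_0>0$ and a submarkovian kernel $R$ with $\pi(dx)P_{t_0}(x,dy)=\pi(dy)R(y,dx)$ as measures on $\chi\times\chi$, and $c_0>0$, $\nu\in\mathcal P(\chi)$ with $R(y,\cdot)/R1(y)\ge c_0\nu(\cdot)$ for $\pi$-a.e. $y$. Condition (DRD): there are a Borel set $A\subseteq\chi$, a probability measure $\nu_1$ with $\nu_1(\chi\setminus A)=0$, $c_1>0$ and $t_1>0$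 such that $P_{t_1}1(x)>0$ for all $x$ and $P_{t_1}(x,\cdot)/P_{t_1}1(x)\ge c_1\nu_1(\cdot)$ for all $x\in\chi$ (this forces $\pi(A)>0$); and (RD) holds with $\nu:=\pi|_A/\pi(A)$ and some $c_0>0$, $t_0>0$. *)

theory Defs
  imports "HOL-Probability.Probability"
begin

text \<open>A submarkovian semigroup (P_t) on the Borel space of a metric space, in discrete time
  (T = natural numbers viewed as reals) or continuous time (T = [0,oo)).
  P t x is the subprobability measure A \<mapsto> P_x(X_t \<in> A, tau > t).\<close>
definition subMarkov_semigroup ::
  "real set \<Rightarrow> (real \<Rightarrow> 'a::metric_space \<Rightarrow> 'a measure) \<Rightarrow> bool" where
  "subMarkov_semigroup T P \<longleftrightarrow>
     (T = range (of_nat :: nat \<Rightarrow> real) \<or> T = {0..}) \<and>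
     (\<forall>t\<in>T. P t \<in> borel \<rightarrow>\<^sub>M subprob_algebra borel) \<and>
     (\<forall>x. P 0 x = return borel x) \<and>
     (\<forall>s\<in>T. \<forall>t\<in>T. \<forall>x. \<forall>B\<in>sets borel.
        emeasure (P (s + t) x) B = (\<integral>\<^sup>+ y. emeasure (P t y) B \<partial>(P s x)))"

definition Pdist :: "(real \<Rightarrow> 'a::metric_space \<Rightarrow> 'a measure) \<Rightarrow> 'a measure \<Rightarrow> real \<Rightarrow> 'a set \<Rightarrow> real" where
  "Pdist P \<mu> t B = (\<integral> x. measure (P t x) B \<partial>\<mu>)"

definition is_QSD ::
  "real set \<Rightarrow> (real \<Rightarrow> 'a::metric_space \<Rightarrow> 'a measure) \<Rightarrow> 'a measure \<Rightarrow> bool" where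
  "is_QSD T P \<pi> \<longleftrightarrow> prob_space \<pi> \<and> sets \<pi> = sets borel \<and>
     (\<forall>t\<in>T. Pdist P \<pi> t UNIV > 0 \<and>
        (\<forall>B\<in>sets borel. Pdist P \<pi> t B / Pdist P \<pi> t UNIV = measure \<pi> B))"

definition surv_rate ::
  "(real \<Rightarrow> 'a::metric_space \<Rightarrow> 'a measure) \<Rightarrow> 'a measure \<Rightarrow> real" where
  "surv_rate P \<pi> = Pdist P \<pi> 1 UNIV"

definition reverse_Dobrushin ::
  "real set \<Rightarrow> (real \<Rightarrow> 'a::metric_space \<Rightarrow> 'a measure) \<Rightarrow> 'a measure \<Rightarrow> real \<Rightarrow> real
     \<Rightarrow> 'a measure \<Rightarrow> bool" where
  "reverse_Dobrushin T P \<pi> t0 c0 \<nu> \<longleftrightarrow>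
     t0 \<in> T \<and> t0 > 0 \<and> c0 > 0 \<and> prob_space \<nu> \<and> sets \<nu> = sets borel \<and>
     (\<exists>R. R \<in> borel \<rightarrow>\<^sub>M subprob_algebra borel \<and>
        (\<forall>C\<in>sets (borel \<Otimes>\<^sub>M borel).
           (\<integral>\<^sup>+ x. \<integral>\<^sup>+ y. indicator C (x, y) \<partial>(P t0 x) \<partial>\<pi>)
         = (\<integral>\<^sup>+ y. \<integral>\<^sup>+ x. indicator C (x, y) \<partial>(R y) \<partial>\<pi>)) \<and>
        (AE y in \<pi>. \<forall>B\<in>sets borel.
           measure (R y) B / measure (R y) UNIV \<ge> c0 * measure \<nu> B))"

end

theory Submission
  imports Defs
begin

text \<open>A QSD is stationary up to loss of mass: \<open>\<pi> P\<^sub>t = surv t \<cdot> \<pi>\<close> with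
  \<open>surv t = P\<^sub>\<pi>(\<tau> > t)\<close> multiplicative in \<open>t\<close>, hence \<open>surv t \<ge> \<lambda>\<^sup>t\<close>. Integrating the
  Dobrushin minorization against \<open>\<pi>\<close> gives \<open>c\<^sub>1 \<nu>\<^sub>1 \<le> \<pi>\<close>, so \<open>\<pi>(A) > 0\<close> and \<open>\<pi>\<close>-null sets
  are \<open>\<nu>\<^sub>1\<close>-null. The reversal identity turns \<open>\<integral>\<^sub>D P\<^sub>t\<^sub>0(\<cdot>,B) d\<pi>\<close> into \<open>\<integral>\<^sub>B R(\<cdot>,D) d\<pi>\<close>,
  where the minorization of \<open>R\<close> applies; for \<open>D \<subseteq> A\<close> this is at least \<open>\<kappa> \<pi>(D)\<close> with
  \<open>\<kappa> = c\<^sub>0 surv(t\<^sub>0) \<pi>(B) / \<pi>(A)\<close>. Hence \<open>P\<^sub>t\<^sub>0(y,B) \<ge> \<kappa>\<close> for \<open>\<pi>\<close>-almost every, and so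
  \<open>\<nu>\<^sub>1\<close>-almost every, \<open>y\<close>. By Chapman-Kolmogorov and the Dobrushin condition at time \<open>t\<^sub>1\<close>,
  \<open>P\<^sub>t\<^sub>0\<^sub>+\<^sub>t\<^sub>1(x,B) \<ge> \<kappa> c\<^sub>1 P\<^sub>t\<^sub>1 1(x) \<ge> \<kappa> c\<^sub>1 P\<^sub>t\<^sub>0\<^sub>+\<^sub>t\<^sub>1 1(x)\<close>.\<close>

lemma nn_integral_kernel_swap:
  fixes K R :: "'a::topological_space \<Rightarrow> 'a measure"
  assumes K: "K \<in> borel \<rightarrow>\<^sub>M subprob_algebra borel" and R: "R \<in> borel \<rightarrow>\<^sub>M subprob_algebra borel"
    and swap: "\<forall>C\<in>sets (borel \<Otimes>\<^sub>M borel).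
           (\<integral>\<^sup>+ x. \<integral>\<^sup>+ y. indicator C (x, y) \<partial>K x \<partial>M) = (\<integral>\<^sup>+ y. \<integral>\<^sup>+ x. indicator C (x, y) \<partial>R y \<partial>M)"
    and E: "E \<in> sets borel" and F: "F \<in> sets borel"
  shows "(\<integral>\<^sup>+ x. indicator E x * emeasure (K x) F \<partial>M) = (\<integral>\<^sup>+ y. indicator F y * emeasure (R y) E \<partial>M)"
proof -
  have K_inner: "(\<integral>\<^sup>+ y. indicator (E \<times> F) (x, y) \<partial>K x) = indicator E x * emeasure (K x) F" for x
    using F subprob_measurableD(2)[OF K]
    by (simp add: indicator_times nn_integral_cmult_indicator)
  have R_inner: "(\<integral>\<^sup>+ x. indicator (E \<times> F) (x, y) \<partial>R y) = indicator F y * emeasure (R y) E" for y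
  proof -
    have "(\<integral>\<^sup>+ x. indicator (E \<times> F) (x, y) \<partial>R y) = (\<integral>\<^sup>+ x. indicator F y * indicator E x \<partial>R y)"
      by (simp add: indicator_times mult.commute)
    then show ?thesis
      using E subprob_measurableD(2)[OF R] by (simp add: nn_integral_cmult_indicator)
  qed
  have "E \<times> F \<in> sets (borel \<Otimes>\<^sub>M borel)"
    using E F by (rule pair_measureI)
  from bspec[OF swap this] show ?thesis
    unfolding K_inner R_inner .
qed

lemma measure_eq_1_if_dominated:
  assumes \<nu>: "prob_space \<nu>" and sets_\<nu>: "sets \<nu> = sets \<mu>" and c: "c > 0"
    and dom: "\<And>E. E \<in> sets \<mu> \<Longrightarrow> c * measure \<nu> E \<le> measure \<mu> E"
    and A: "A \<in> sets \<mu>" and G: "G \<in> sets \<mu>"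
    and \<nu>_A: "measure \<nu> (space \<nu> - A) = 0" and \<mu>_null: "measure \<mu> (A - G) = 0"
  shows "measure \<nu> G = 1"
proof -
  interpret prob_space \<nu> by (rule \<nu>)
  have "c * measure \<nu> (A - G) \<le> 0"
    using dom[of "A - G"] A G \<mu>_null by auto
  then have \<nu>_AG: "measure \<nu> (A - G) = 0"
    using c by (simp add: mult_le_0_iff antisym)
  have "measure \<nu> (space \<nu> - G) \<le> measure \<nu> ((space \<nu> - A) \<union> (A - G))"
    using A G sets_\<nu> by (intro finite_measure_mono) auto
  also have "\<dots> \<le> measure \<nu> (space \<nu> - A) + measure \<nu> (A - G)"
    using A G sets_\<nu> by (intro measure_Un_le) auto
  finally have "measure \<nu> (space \<nu> - G) = 0"
    using \<nu>_A \<nu>_AG by (simp add: antisym)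
  then show ?thesis
    using prob_compl[of G] G sets_\<nu> by simp
qed

locale submarkov_qsd =
  fixes T :: "real set" and P :: "real \<Rightarrow> 'a::metric_space \<Rightarrow> 'a measure" and \<pi> :: "'a measure"
  assumes semigroup: "subMarkov_semigroup T P"
    and qsd: "is_QSD T P \<pi>"
begin

lemma time_set_cases: "T = range (of_nat :: nat \<Rightarrow> real) \<or> T = {0..}"
  using semigroup unfolding subMarkov_semigroup_def by blast

lemma zero_in_time: "0 \<in> T"
  using time_set_cases by (metis atLeast_iff order_refl of_nat_0 rangeI)

lemma one_in_time: "1 \<in> T"
  using time_set_cases by (metis atLeast_iff zero_le_one of_nat_1 rangeI)

lemma add_in_time: "s \<in> T \<Longrightarrow> t \<in> T \<Longrightarrow> s + t \<in> T"
  using time_set_cases by (auto, metis of_nat_add rangeI)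

lemma of_nat_in_time: "real n \<in> T"
  using time_set_cases by auto

lemma P_kernel: "t \<in> T \<Longrightarrow> P t \<in> borel \<rightarrow>\<^sub>M subprob_algebra borel"
  using semigroup unfolding subMarkov_semigroup_def by blast

lemma P_add: "s \<in> T \<Longrightarrow> t \<in> T \<Longrightarrow> B \<in> sets borel \<Longrightarrow>
    emeasure (P (s + t) x) B = (\<integral>\<^sup>+ y. emeasure (P t y) B \<partial>P s x)"
  using semigroup unfolding subMarkov_semigroup_def by blast

lemma sets_P: "t \<in> T \<Longrightarrow> sets (P t x) = sets borel"
  using subprob_measurableD(2)[OF P_kernel] by simp

lemma space_P: "t \<in> T \<Longrightarrow> space (P t x) = UNIV"
  using subprob_measurableD(1)[OF P_kernel] by simp

lemma subprob_space_P: "t \<in> T \<Longrightarrow> subprob_space (P t x)"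
  using measurable_space[OF P_kernel] by (simp add: space_subprob_algebra)

lemma emeasure_P_eq_measure: "t \<in> T \<Longrightarrow> emeasure (P t x) B = ennreal (measure (P t x) B)"
  using subprob_space_P
  by (simp add: subprob_space.emeasure_subprob_space_less_top emeasure_eq_ennreal_measure)

lemma measure_P_le_1: "t \<in> T \<Longrightarrow> measure (P t x) B \<le> 1"
  using subprob_space_P subprob_space.subprob_measure_le_1 by blast

lemma measure_P_le_UNIV: "t \<in> T \<Longrightarrow> measure (P t x) B \<le> measure (P t x) UNIV"
  using subprob_space_P finite_measure.bounded_measure space_P
  by (metis subprob_space_def)

lemma measurable_measure_P[measurable]:
  "t \<in> T \<Longrightarrow> B \<in> sets borel \<Longrightarrow> (\<lambda>x. measure (P t x) B) \<in> borel_measurable borel"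
  by (rule measurable_compose[OF P_kernel measurable_measure_subprob_algebra])

lemma measurable_emeasure_P[measurable]:
  "t \<in> T \<Longrightarrow> B \<in> sets borel \<Longrightarrow> (\<lambda>x. emeasure (P t x) B) \<in> borel_measurable borel"
  by (rule measurable_compose[OF P_kernel measurable_emeasure_subprob_algebra])

lemma measure_P_add_UNIV_le:
  assumes s: "s \<in> T" and t: "t \<in> T"
  shows "measure (P (s + t) x) UNIV \<le> measure (P s x) UNIV"
proof -
  have "ennreal (measure (P (s + t) x) UNIV) = (\<integral>\<^sup>+ y. emeasure (P t y) UNIV \<partial>P s x)"
    using P_add[OF s t] emeasure_P_eq_measure add_in_time[OF s t] by simp
  also have "\<dots> \<le> (\<integral>\<^sup>+ y. 1 \<partial>P s x)"
    using emeasure_P_eq_measure[OF t] measure_P_le_1[OF t] by (intro nn_integral_mono) simp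
  also have "\<dots> = ennreal (measure (P s x) UNIV)"
    using space_P[OF s] emeasure_P_eq_measure[OF s] by simp
  finally show ?thesis
    by simp
qed

subsection \<open>The quasi-stationary distribution\<close>

lemma prob_space_pi: "prob_space \<pi>" and sets_pi: "sets \<pi> = sets borel"
  using qsd unfolding is_QSD_def by auto

lemma finite_measure_pi: "finite_measure \<pi>"
  using prob_space_pi by (simp add: prob_space_def)

lemma space_pi: "space \<pi> = UNIV"
  using sets_pi sets_eq_imp_space_eq by fastforce

lemma borel_measurable_pi: "f \<in> borel_measurable borel \<Longrightarrow> f \<in> borel_measurable \<pi>"
  by (simp add: measurable_cong_sets[OF sets_pi refl])

lemma integrable_measure_P: "t \<in> T \<Longrightarrow> B \<in> sets borel \<Longrightarrow> integrable \<pi> (\<lambda>x. measure (P t x) B)"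
  by (rule finite_measure.integrable_const_bound[OF finite_measure_pi, where B=1])
    (auto simp: measure_P_le_1 borel_measurable_pi)

definition surv :: "real \<Rightarrow> real" where
  "surv t = Pdist P \<pi> t UNIV"

lemma surv_pos: "t \<in> T \<Longrightarrow> surv t > 0"
  using qsd unfolding is_QSD_def surv_def by blast

lemma Pdist_eq_surv:
  assumes t: "t \<in> T" and B: "B \<in> sets borel"
  shows "Pdist P \<pi> t B = surv t * measure \<pi> B"
proof -
  have "Pdist P \<pi> t B / surv t = measure \<pi> B"
    using qsd t B unfolding is_QSD_def surv_def by blast
  then show ?thesis
    using surv_pos[OF t] by (simp add: field_simps)
qed

lemma nn_integral_emeasure_P:
  "t \<in> T \<Longrightarrow> B \<in> sets borel \<Longrightarrow> (\<integral>\<^sup>+ x. emeasure (P t x) B \<partial>\<pi>) = ennreal (surv t * measure \<pi> B)"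
  by (simp add: emeasure_P_eq_measure Pdist_eq_surv[symmetric] Pdist_def
      nn_integral_eq_integral[OF integrable_measure_P])

lemma bind_P_eq_density: 
  assumes t: "t \<in> T" shows "\<pi> \<bind> P t = density \<pi> (\<lambda>_. ennreal (surv t))"
proof (rule measure_eqI)
  have sets_bind: "sets (\<pi> \<bind> P t) = sets borel"
    using sets_bind[of \<pi> "P t" borel] sets_P[OF t] space_pi by simp
  then show "sets (\<pi> \<bind> P t) = sets (density \<pi> (\<lambda>_. ennreal (surv t)))"
    using sets_pi by simp
  fix B assume "B \<in> sets (\<pi> \<bind> P t)"
  hence B: "B \<in> sets borel" using sets_bind by simp
  have "emeasure (\<pi> \<bind> P t) B = (\<integral>\<^sup>+ x. emeasure (P t x) B \<partial>\<pi>)"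
    using P_kernel[OF t] B by (intro emeasure_bind) (auto simp: space_pi measurable_cong_sets[OF sets_pi refl])
  also have "\<dots> = ennreal (surv t * measure \<pi> B)"
    using nn_integral_emeasure_P t B by simp
  also have "\<dots> = emeasure (density \<pi> (\<lambda>_. ennreal (surv t))) B"
    using B sets_pi surv_pos[OF t]
    by (simp add: emeasure_density nn_integral_cmult_indicator ennreal_mult
        finite_measure.emeasure_eq_measure[OF finite_measure_pi])
  finally show "emeasure (\<pi> \<bind> P t) B = emeasure (density \<pi> (\<lambda>_. ennreal (surv t))) B" .
qed

lemma nn_integral_P_stationary:
  assumes t: "t \<in> T" and h: "h \<in> borel_measurable borel"
  shows "(\<integral>\<^sup>+ x. \<integral>\<^sup>+ y. h y \<partial>P t x \<partial>\<pi>) = ennreal (surv t) * (\<integral>\<^sup>+ y. h y \<partial>\<pi>)"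
proof -
  have "(\<integral>\<^sup>+ x. \<integral>\<^sup>+ y. h y \<partial>P t x \<partial>\<pi>) = (\<integral>\<^sup>+ y. h y \<partial>(\<pi> \<bind> P t))"
    using P_kernel[OF t] h
    by (intro nn_integral_bind[symmetric]) (auto simp: measurable_cong_sets[OF sets_pi refl])
  also have "\<dots> = ennreal (surv t) * (\<integral>\<^sup>+ y. h y \<partial>\<pi>)"
    unfolding bind_P_eq_density[OF t]
    using borel_measurable_pi[OF h] by (simp add: nn_integral_density nn_integral_cmult)
  finally show ?thesis .
qed

subsection \<open>The survival function\<close>

lemma surv_add: assumes s: "s \<in> T" and t: "t \<in> T" shows "surv (s + t) = surv s * surv t"
proof -
  have surv_nn: "ennreal (surv u) = (\<integral>\<^sup>+ x. emeasure (P u x) UNIV \<partial>\<pi>)" if "u \<in> T" for u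
    using nn_integral_emeasure_P[OF that, of UNIV] prob_space.prob_space[OF prob_space_pi] space_pi
    by simp
  have "ennreal (surv (s + t)) = (\<integral>\<^sup>+ x. \<integral>\<^sup>+ y. emeasure (P t y) UNIV \<partial>P s x \<partial>\<pi>)"
    using surv_nn[OF add_in_time[OF s t]] P_add[OF s t] by simp
  also have "\<dots> = ennreal (surv s * surv t)"
    using nn_integral_P_stationary[OF s measurable_emeasure_P[OF t]] surv_nn[OF t, symmetric] surv_pos[OF s] surv_pos[OF t]
    by (simp add: ennreal_mult less_imp_le)
  finally show ?thesis
    using surv_pos s t add_in_time by (simp add: less_imp_le)
qed

lemma surv_le_1: assumes t: "t \<in> T" shows "surv t \<le> 1"
proof -
  have "surv t = (\<integral> x. measure (P t x) UNIV \<partial>\<pi>)"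
    by (simp add: surv_def Pdist_def)
  also have "\<dots> \<le> (\<integral> x. 1 \<partial>\<pi>)"
    using integrable_measure_P[OF t] measure_P_le_1[OF t]
    by (intro integral_mono finite_measure.integrable_const[OF finite_measure_pi]) auto
  finally show ?thesis
    using prob_space.prob_space[OF prob_space_pi] space_pi by simp
qed

lemma surv_add_le: "s \<in> T \<Longrightarrow> t \<in> T \<Longrightarrow> surv (s + t) \<le> surv s"
  using surv_add[of s t] surv_le_1[of t] surv_pos[of s] by (simp add: mult_left_le)

lemma surv_of_nat: "surv (real n) = surv 1 ^ n"
proof (induction n)
  case 0
  have "surv 0 = surv 0 * surv 0" using surv_add[OF zero_in_time zero_in_time] by simp
  then show ?case using surv_pos[OF zero_in_time] by simp
next
  case (Suc n)
  have "surv (real (Suc n)) = surv (real n) * surv 1"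
    using surv_add[OF of_nat_in_time one_in_time] by (simp add: add.commute)
  then show ?case using Suc by simp
qed

lemma surv_of_nat_mult:
  assumes T: "T = {0..}" and t: "0 \<le> t"
  shows "surv (real k * t) = surv t ^ k"
proof (induction k)
  case 0 then show ?case using surv_of_nat[of 0] by simp
next
  case (Suc k)
  have "surv (real (Suc k) * t) = surv (real k * t) * surv t"
    using surv_add[of "real k * t" t] T t by (simp add: algebra_simps)
  then show ?case using Suc by simp
qed

text \<open>Rounding \<open>k t\<close> up to an integer costs at most one factor of \<open>surv 1\<close>.\<close>

lemma powr_surv_1_le_surv_perturbed:
  assumes T: "T = {0..}" and t: "0 \<le> t" and k: "k > 0"
  shows "surv 1 powr (t + 1 / real k) \<le> surv t"
proof -
  define l where "l = surv 1"
  have l: "0 < l" "l \<le> 1" using surv_pos[OF one_in_time] surv_le_1[OF one_in_time] by (auto simp: l_def)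
  define c where "c = nat \<lceil>real k * t\<rceil>"
  have c: "real k * t \<le> real c" "real c \<le> real k * t + 1"
    using t unfolding c_def by simp_all
  have "(t + 1 / real k) * real k = real k * t + 1"
    using k by (simp add: field_simps)
  then have "(l powr (t + 1 / real k)) ^ k = l powr (real k * t + 1)"
    using l by (simp add: powr_realpow[symmetric] powr_powr)
  also have "\<dots> \<le> l powr (real c)"
    using powr_mono'[OF c(2)] l by simp
  also have "\<dots> = surv (real c)"
    using powr_realpow[OF l(1)] surv_of_nat by (simp add: l_def)
  also have "\<dots> \<le> surv (real k * t)"
    using surv_add_le[of "real k * t" "real c - real k * t"] T c t by simp
  also have "\<dots> = surv t ^ k"
    by (rule surv_of_nat_mult[OF T t])
  finally show ?thesis
    using k surv_pos[of t] T t unfolding l_def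
    by (metis power_le_imp_le_base gr0_implies_Suc atLeast_iff less_imp_le)
qed

lemma powr_surv_1_le_surv: assumes t: "t \<in> T" shows "surv 1 powr t \<le> surv t"
  using time_set_cases
proof
  assume "T = range real"
  then obtain n where "t = real n" using t by auto
  then show ?thesis using surv_of_nat[of n] powr_realpow[OF surv_pos[OF one_in_time]] by simp
next
  assume T: "T = {0..}"
  have t0: "0 \<le> t" using t T by auto
  have "(\<lambda>k. 1 / real (Suc k)) \<longlonglongrightarrow> 0"
    using LIMSEQ_inverse_real_of_nat by (simp add: inverse_eq_divide)
  then have lim: "(\<lambda>k. surv 1 powr (t + 1 / real (Suc k))) \<longlonglongrightarrow> surv 1 powr (t + 0)"
    using surv_pos[OF one_in_time] by (intro tendsto_powr tendsto_const tendsto_add) auto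
  have "surv 1 powr (t + 1 / real (Suc k)) \<le> surv t" for k
    using powr_surv_1_le_surv_perturbed[OF T t0, of "Suc k"] by simp
  then show ?thesis
    using LIMSEQ_le_const2[OF lim] by simp
qed

subsection \<open>The Dobrushin and reverse Dobrushin conditions\<close>

lemma Dobrushin_le_pi:
  assumes t1: "t1 \<in> T" and P_t1_pos: "\<forall>x. measure (P t1 x) UNIV > 0"
    and Dobrushin: "\<forall>x. \<forall>B\<in>sets borel.
                      measure (P t1 x) B / measure (P t1 x) UNIV \<ge> c1 * measure \<nu> B"
    and E: "E \<in> sets borel"
  shows "c1 * measure \<nu> E \<le> measure \<pi> E"
proof -
  have "c1 * measure \<nu> E * measure (P t1 x) UNIV \<le> measure (P t1 x) E" for x
    using Dobrushin E P_t1_pos by (simp add: pos_le_divide_eq)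
  then have "(\<integral>x. c1 * measure \<nu> E * measure (P t1 x) UNIV \<partial>\<pi>) \<le> (\<integral>x. measure (P t1 x) E \<partial>\<pi>)"
    by (intro integral_mono integrable_mult_right integrable_measure_P t1 E) auto
  then have "c1 * measure \<nu> E * surv t1 \<le> surv t1 * measure \<pi> E"
    using Pdist_eq_surv[OF t1 E] by (simp add: Pdist_def surv_def)
  then show ?thesis
    using surv_pos[OF t1] by (simp add: mult.commute)
qed

lemma reverse_Dobrushin_set_integral_ge:
  assumes RD: "reverse_Dobrushin T P \<pi> t0 c0 (uniform_measure \<pi> A)"
    and A: "A \<in> sets borel" and pA: "measure \<pi> A > 0"
    and B: "B \<in> sets borel" and D: "D \<in> sets borel" "D \<subseteq> A"
  shows "ennreal (c0 * surv t0 * measure \<pi> B / measure \<pi> A * measure \<pi> D)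
           \<le> (\<integral>\<^sup>+ x. indicator D x * emeasure (P t0 x) B \<partial>\<pi>)"
proof -
  from RD have t0: "t0 \<in> T" and c0: "c0 > 0" unfolding reverse_Dobrushin_def by auto
  from RD obtain R where R: "R \<in> borel \<rightarrow>\<^sub>M subprob_algebra borel"
    and swap: "\<forall>C\<in>sets (borel \<Otimes>\<^sub>M borel).
           (\<integral>\<^sup>+ x. \<integral>\<^sup>+ y. indicator C (x, y) \<partial>(P t0 x) \<partial>\<pi>)
         = (\<integral>\<^sup>+ y. \<integral>\<^sup>+ x. indicator C (x, y) \<partial>(R y) \<partial>\<pi>)"
    and R_lower: "AE y in \<pi>. \<forall>B\<in>sets borel.
           measure (R y) B / measure (R y) UNIV \<ge> c0 * measure (uniform_measure \<pi> A) B"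
    unfolding reverse_Dobrushin_def by blast
  have emeasure_R: "emeasure (R y) E = ennreal (measure (R y) E)" for y E
    using measurable_space[OF R]
    by (simp add: space_subprob_algebra subprob_space.emeasure_subprob_space_less_top
        emeasure_eq_ennreal_measure)
  define \<rho> where "\<rho> = c0 * measure (uniform_measure \<pi> A) D"
  have \<rho>: "\<rho> = c0 * measure \<pi> D / measure \<pi> A" "\<rho> \<ge> 0"
    using pA D sets_pi c0 finite_measure.emeasure_eq_measure[OF finite_measure_pi]
    by (auto simp: \<rho>_def Int_absorb1)
  have R_ae: "AE y in \<pi>. ennreal (\<rho> * measure (R y) UNIV) \<le> emeasure (R y) D"
    using R_lower
  proof eventually_elim
    case (elim y)
    have "\<rho> * measure (R y) UNIV \<le> measure (R y) D"
    proof (cases "measure (R y) UNIV = 0")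
      case True
      interpret subprob_space "R y"
        using measurable_space[OF R] by (simp add: space_subprob_algebra)
      have "measure (R y) D \<le> measure (R y) UNIV"
        using bounded_measure subprob_measurableD(1)[OF R] by simp
      then show ?thesis
        using True by simp
    next
      case False
      then show ?thesis
        using elim D by (simp add: \<rho>_def pos_le_divide_eq less_le)
    qed
    then show ?case by (simp add: emeasure_R)
  qed
  have R_bound: "ennreal \<rho> * (\<integral>\<^sup>+ y. indicator B y * emeasure (R y) UNIV \<partial>\<pi>)
              \<le> (\<integral>\<^sup>+ y. indicator B y * emeasure (R y) D \<partial>\<pi>)"
  proof -
    have "(\<lambda>y. indicator B y * emeasure (R y) UNIV) \<in> borel_measurable \<pi>"
      using B measurable_compose[OF R measurable_emeasure_subprob_algebra[OF space_in_borel]]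
      by (intro borel_measurable_pi borel_measurable_times_ennreal borel_measurable_indicator)
    then have "ennreal \<rho> * (\<integral>\<^sup>+ y. indicator B y * emeasure (R y) UNIV \<partial>\<pi>)
                = (\<integral>\<^sup>+ y. indicator B y * ennreal (\<rho> * measure (R y) UNIV) \<partial>\<pi>)"
      using \<rho>(2) by (simp add: nn_integral_cmult[symmetric] emeasure_R ennreal_mult mult.left_commute)
    also have "\<dots> \<le> (\<integral>\<^sup>+ y. indicator B y * emeasure (R y) D \<partial>\<pi>)"
      using R_ae by (intro nn_integral_mono_AE) (auto elim!: eventually_mono intro: mult_left_mono)
    finally show ?thesis .
  qed
  have "ennreal (c0 * surv t0 * measure \<pi> B / measure \<pi> A * measure \<pi> D)
          = ennreal \<rho> * ennreal (surv t0 * measure \<pi> B)"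
    using \<rho> surv_pos[OF t0] by (simp add: ennreal_mult[symmetric] field_simps)
  also have "\<dots> = ennreal \<rho> * (\<integral>\<^sup>+ x. indicator UNIV x * emeasure (P t0 x) B \<partial>\<pi>)"
    using nn_integral_emeasure_P[OF t0 B] by simp
  also have "\<dots> = ennreal \<rho> * (\<integral>\<^sup>+ y. indicator B y * emeasure (R y) UNIV \<partial>\<pi>)"
    using nn_integral_kernel_swap[OF P_kernel[OF t0] R swap space_in_borel B] by simp
  also have "\<dots> \<le> (\<integral>\<^sup>+ y. indicator B y * emeasure (R y) D \<partial>\<pi>)"
    by (rule R_bound)
  also have "\<dots> = (\<integral>\<^sup>+ x. indicator D x * emeasure (P t0 x) B \<partial>\<pi>)"
    using nn_integral_kernel_swap[OF P_kernel[OF t0] R swap D(1) B] by simp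
  finally show ?thesis .
qed

lemma reverse_Dobrushin_ae_lower_bound:
  assumes RD: "reverse_Dobrushin T P \<pi> t0 c0 (uniform_measure \<pi> A)"
    and A: "A \<in> sets borel" and pA: "measure \<pi> A > 0" and B: "B \<in> sets borel"
  shows "measure \<pi> (A - {x. c0 * surv t0 * measure \<pi> B / measure \<pi> A \<le> measure (P t0 x) B}) = 0"
proof (rule ccontr)
  from RD have t0: "t0 \<in> T" unfolding reverse_Dobrushin_def by auto
  define \<kappa> where "\<kappa> = c0 * surv t0 * measure \<pi> B / measure \<pi> A"
  define D where "D = A - {x. \<kappa> \<le> measure (P t0 x) B}"
  assume "measure \<pi> (A - {x. c0 * surv t0 * measure \<pi> B / measure \<pi> A \<le> measure (P t0 x) B}) \<noteq> 0"
  then have pD: "emeasure \<pi> D \<noteq> 0"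
    unfolding D_def \<kappa>_def by (auto simp: measure_def)
  have "D \<in> sets borel"
    unfolding D_def using A measurable_measure_P[OF t0 B] by measurable
  then have D: "D \<in> sets borel" "D \<subseteq> A"
    unfolding D_def by blast+
  have "(\<lambda>x. indicator D x * measure (P t0 x) B) \<in> borel_measurable \<pi>"
    using D(1) measurable_measure_P[OF t0 B]
    by (intro borel_measurable_pi borel_measurable_times borel_measurable_indicator)
  then have int_D: "integrable \<pi> (\<lambda>x. indicator D x * measure (P t0 x) B)"
    using measure_P_le_1[OF t0]
    by (intro finite_measure.integrable_const_bound[OF finite_measure_pi, where B=1])
      (auto simp: indicator_def)
  have "ennreal (\<kappa> * measure \<pi> D) \<le> (\<integral>\<^sup>+ x. indicator D x * emeasure (P t0 x) B \<partial>\<pi>)"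
    using reverse_Dobrushin_set_integral_ge[OF RD A pA B D] unfolding \<kappa>_def .
  also have "\<dots> = ennreal (\<integral> x. indicator D x * measure (P t0 x) B \<partial>\<pi>)"
    using emeasure_P_eq_measure[OF t0]
    by (simp add: nn_integral_eq_integral[OF int_D, symmetric] indicator_mult_ennreal mult.commute)
  finally have ge: "\<kappa> * measure \<pi> D \<le> (\<integral> x. indicator D x * measure (P t0 x) B \<partial>\<pi>)"
    by (simp add: integral_nonneg_AE)
  have int_\<kappa>: "integrable \<pi> (\<lambda>x. indicator D x * \<kappa>)"
    using D(1) sets_pi finite_measure.emeasure_eq_measure[OF finite_measure_pi] by simp
  have "(\<integral> x. indicator D x * measure (P t0 x) B \<partial>\<pi>) < (\<integral> x. indicator D x * \<kappa> \<partial>\<pi>)"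
    using D(1) sets_pi pD
    by (intro finite_measure.integral_less_AE[OF finite_measure_pi int_D int_\<kappa>, where A=D])
      (auto simp: D_def indicator_def finite_measure.emeasure_eq_measure[OF finite_measure_pi])
  also have "\<dots> = \<kappa> * measure \<pi> D"
    using D(1) sets_pi by (simp add: mult.commute)
  finally show False
    using ge by simp
qed

lemma measure_P_add_ge:
  assumes s: "s \<in> T" and t: "t \<in> T" and \<kappa>: "\<kappa> \<ge> 0" and B: "B \<in> sets borel"
  shows "\<kappa> * measure (P s x) {y. \<kappa> \<le> measure (P t y) B} \<le> measure (P (s + t) x) B"
proof -
  define G where "G = {y. \<kappa> \<le> measure (P t y) B}"
  have G: "G \<in> sets borel"
    unfolding G_def using measurable_measure_P[OF t B] by measurable
  have "ennreal (\<kappa> * measure (P s x) G) = (\<integral>\<^sup>+ y. ennreal \<kappa> * indicator G y \<partial>P s x)"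
    using G sets_P[OF s] emeasure_P_eq_measure[OF s] \<kappa>
    by (simp add: nn_integral_cmult_indicator ennreal_mult)
  also have "\<dots> \<le> (\<integral>\<^sup>+ y. emeasure (P t y) B \<partial>P s x)"
    using emeasure_P_eq_measure[OF t] by (intro nn_integral_mono) (auto simp: G_def indicator_def)
  also have "\<dots> = ennreal (measure (P (s + t) x) B)"
    using P_add[OF s t B] emeasure_P_eq_measure[OF add_in_time[OF s t]] by simp
  finally show ?thesis
    unfolding G_def by simp
qed

lemma P_add_ratio_ge:
  assumes t0: "t0 \<in> T" and t1: "t1 \<in> T" and \<kappa>: "\<kappa> \<ge> 0" and c1: "c1 \<ge> 0"
    and B: "B \<in> sets borel" and good: "measure \<nu> {y. \<kappa> \<le> measure (P t0 y) B} = 1"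
    and pos: "measure (P t1 x) UNIV > 0"
    and Dobrushin: "\<forall>E\<in>sets borel. c1 * measure \<nu> E \<le> measure (P t1 x) E / measure (P t1 x) UNIV"
  shows "\<kappa> * c1 \<le> measure (P (t0 + t1) x) B / measure (P (t0 + t1) x) UNIV"
proof -
  define m where "m = measure (P t1 x) UNIV"
  have "{y. \<kappa> \<le> measure (P t0 y) B} \<in> sets borel"
    using measurable_measure_P[OF t0 B] by measurable
  then have "c1 \<le> measure (P t1 x) {y. \<kappa> \<le> measure (P t0 y) B} / m"
    using Dobrushin good unfolding m_def by fastforce
  then have "c1 * m \<le> measure (P t1 x) {y. \<kappa> \<le> measure (P t0 y) B}"
    using pos by (simp add: m_def pos_le_divide_eq)
  then have num: "\<kappa> * c1 * m \<le> measure (P (t0 + t1) x) B"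
    using measure_P_add_ge[OF t1 t0 \<kappa> B, of x] \<kappa>
    by (simp add: add.commute mult.assoc) (meson mult_left_mono order_trans)
  have den: "measure (P (t0 + t1) x) UNIV \<le> m"
    using measure_P_add_UNIV_le[OF t1 t0, of x] by (simp add: m_def add.commute)
  show ?thesis
  proof (cases "measure (P (t0 + t1) x) UNIV = 0")
    case True
    then have "\<kappa> * c1 * m \<le> 0"
      using num measure_P_le_UNIV[OF add_in_time[OF t0 t1], of x B] by simp
    then show ?thesis
      using True pos by (simp add: m_def mult_le_0_iff)
  next
    case False
    then have "\<kappa> * c1 * measure (P (t0 + t1) x) UNIV \<le> measure (P (t0 + t1) x) B"
      using num den \<kappa> c1 by (meson mult_left_mono mult_nonneg_nonneg order_trans)
    then show ?thesis
      using False by (simp add: pos_le_divide_eq less_le)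
  qed
qed

end

theorem mainTheorem4:
  fixes T :: "real set" and P :: "real \<Rightarrow> 'a::metric_space \<Rightarrow> 'a measure"
    and \<pi> \<nu>1 :: "'a measure" and A :: "'a set" and c0 c1 t0 t1 :: real
  assumes semigroup: "subMarkov_semigroup T P"
    and qsd: "is_QSD T P \<pi>"
    and A_borel: "A \<in> sets borel"
    and nu1_prob: "prob_space \<nu>1" and nu1_sets: "sets \<nu>1 = sets borel"
    and nu1_A: "measure \<nu>1 (UNIV - A) = 0"
    and c1_pos: "c1 > 0" and t1_T: "t1 \<in> T" and t1_pos: "t1 > 0"
    and P_t1_pos: "\<forall>x. measure (P t1 x) UNIV > 0"
    and Dobrushin: "\<forall>x. \<forall>B\<in>sets borel.
                      measure (P t1 x) B / measure (P t1 x) UNIV \<ge> c1 * measure \<nu>1 B"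
    and RD: "reverse_Dobrushin T P \<pi> t0 c0 (uniform_measure \<pi> A)"
  shows "\<forall>x. \<forall>B\<in>sets borel.
           measure (P (t0 + t1) x) B / measure (P (t0 + t1) x) UNIV
             \<ge> (surv_rate P \<pi> powr t0 * c0 * c1 / measure \<pi> A) * measure \<pi> B"
proof (intro allI ballI)
  interpret submarkov_qsd T P \<pi> using semigroup qsd by (rule submarkov_qsd.intro)
  fix x and B :: "'a set" assume B: "B \<in> sets borel"
  from RD have t0: "t0 \<in> T" and c0: "c0 > 0" unfolding reverse_Dobrushin_def by auto
  have dom: "c1 * measure \<nu>1 E \<le> measure \<pi> E" if "E \<in> sets \<pi>" for E
    using Dobrushin_le_pi[OF t1_T P_t1_pos Dobrushin] that sets_pi by simp
  have A: "A \<in> sets \<pi>" and sets_\<nu>1: "sets \<nu>1 = sets \<pi>"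
    using A_borel nu1_sets sets_pi by simp_all
  have \<nu>1_A: "measure \<nu>1 (space \<nu>1 - A) = 0"
    using nu1_A sets_eq_imp_space_eq[OF nu1_sets] by simp
  have \<nu>1_a_s: "measure \<nu>1 G = 1" if "G \<in> sets borel" "measure \<pi> (A - G) = 0" for G
    using measure_eq_1_if_dominated[OF nu1_prob sets_\<nu>1 c1_pos dom A _ \<nu>1_A] that sets_pi
    by simp
  have pA: "measure \<pi> A > 0"
    using dom[OF A] \<nu>1_a_s[OF A_borel] c1_pos by simp
  define \<kappa> where "\<kappa> = c0 * surv t0 * measure \<pi> B / measure \<pi> A"
  have "measure \<nu>1 {y. \<kappa> \<le> measure (P t0 y) B} = 1"
    using reverse_Dobrushin_ae_lower_bound[OF RD A_borel pA B] measurable_measure_P[OF t0 B]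
    by (intro \<nu>1_a_s) (simp_all add: \<kappa>_def)
  then have "\<kappa> * c1 \<le> measure (P (t0 + t1) x) B / measure (P (t0 + t1) x) UNIV"
    using Dobrushin P_t1_pos c0 pA surv_pos[OF t0] c1_pos
    by (intro P_add_ratio_ge[OF t0 t1_T _ _ B]) (auto simp: \<kappa>_def)
  moreover have "surv_rate P \<pi> powr t0 * c0 * c1 / measure \<pi> A * measure \<pi> B \<le> \<kappa> * c1"
    using powr_surv_1_le_surv[OF t0] c0 c1_pos pA measure_nonneg[of \<pi> B]
    by (simp add: \<kappa>_def surv_rate_def surv_def[symmetric] divide_right_mono mult_right_mono)
  ultimately show "(surv_rate P \<pi> powr t0 * c0 * c1 / measure \<pi> A) * measure \<pi> B
      \<le> measure (P (t0 + t1) x) B / measure (P (t0 + t1) x) UNIV"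
    by linarith
qed

end
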